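(* Let $L=2$ and suppose, conditionally on the data $\mathbf y_1,\mathbf y_2$, that $f_1(\mathbf x)\sim\mathcal N(\mu_1^*(\mathbf x),\sigma_1^{*2}(\mathbf x))$ and $f_2(\mathbf x)\mid f_1(\mathbf x)\sim\mathcal N(\mu_2(\mathbf x,f_1(\mathbf x)),\sigma_2^2(\mathbf x,f_1(\mathbf x)))$. Then $\sigma_2^{*2}(\mathbf x):=\mathbb V[f_2(\mathbf x)\mid\mathbf y_1,\mathbf y_2]=V_1(\mathbf x)+V_2(\mathbf x)$, where $V_1(\mathbf x)=\mathbb V[\mathbb E[f_2(\mathbf x)\mid f_1(\mathbf x),\mathbf y_1,\mathbf y_2]]$ and $V_2(\mathbf x)=\mathbb E[\mathbb V[f_2(\mathbf x)\mid f_1(\mathbf x),\mathbf y_1,\mathbf y_2]]$ are given in closed form by $$V_1(\mathbf x)=-(\mu_2^*(\mathbf x)-\alpha_2)^2+\sum_{i,k=1}^{n_2}\frac{r_ir_k}{\sqrt{1+4\sigma_1^{*2}(\mathbf x)/\theta_{2y}}}\exp\Big(-\sum_{j=1}^d\frac{(x_j-x^{[2]}_{ij})^2+(x_j-x^{[2]}_{kj})^2}{\theta_{2j}}-a_{ik}(\mathbf x)\Big),$$ $$V_2(\mathbf x)=\tau_2^2\Big(1-\frac{1}{\sqrt{1+4\sigma_1^{*2}(\mathbf x)/\theta_{2y}}}\sum_{i,k=1}^{n_2}(\mathbf K_2^{-1})_{ik}\exp\Big(-\sum_{j=1}^d\frac{(x_j-x^{[2]}_{ij})^2+(x_j-x^{[2]}_{kj})^2}{\theta_{2j}}-a_{ik}(\mathbf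 x)\Big)\Big),$$ with $a_{ik}(\mathbf x)=\dfrac{(\frac{y^{[1]}_i+y^{[1]}_k}{2}-\mu_1^*(\mathbf x))^2}{\theta_{2y}/2+2\sigma_1^{*2}(\mathbf x)}+\dfrac{(y^{[1]}_i-y^{[1]}_k)^2}{2\theta_{2y}}$ and $\mu_2^*(\mathbf x)=\mathbb E[f_2(\mathbf x)\mid\mathbf y_1,\mathbf y_2]$.
   Context: Setting: $d\ge1$; nested designs $\mathcal X_2\subseteq\mathcal X_1\subset\mathbb R^d$, $\mathcal X_l=\{\mathbf x^{[l]}_1,\dots,\mathbf x^{[l]}_{n_l}\}$, with $\mathbf x^{[2]}_i=\mathbf x^{[1]}_i$ for $i\le n_2$; outputs $\mathbf y_l=(y^{[l]}_i)_i$. Parameters $\alpha_l\in\mathbb R$, $\tau_l^2>0$, $\theta_{lj},\theta_{2y}>0$. $K_1(\mathbf x,\mathbf x')=\prod_j\exp(-(x_j-x_j')^2/\theta_{1j})$; $K_2((\mathbf x,y),(\mathbf x',y'))=\exp(-(y-y')^2/\theta_{2y})\prod_j\exp(-(x_j-x_j')^2/\theta_{2j})$. $\mathbf K_1=(K_1(\mathbf x^{[1]}_i,\mathbf x^{[1]}_k))$, $\mathbf K_2=(K_2((\mathbf x^{[2]}_i,y^{[1]}_i),(\mathbf x^{[2]}_k,y^{[1]}_k)))$, invertible; $r_i=(\mathbf K_2^{-1}(\mathbf y_2-\alpha_2\mathbf 1_{n_2}))_i$. $\mu_1^*(\mathbf x)=\alpha_1+\mathbf k_1(\mathbf x)^T\mathbf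 K_1^{-1}(\mathbf y_1-\alpha_1\mathbf 1_{n_1})$, $\sigma_1^{*2}(\mathbf x)=\tau_1^2(1-\mathbf k_1(\mathbf x)^T\mathbf K_1^{-1}\mathbf k_1(\mathbf x))$ with $(\mathbf k_1(\mathbf x))_i=K_1(\mathbf x,\mathbf x^{[1]}_i)$. For $u\in\mathbb R$, $(\mathbf k_2(\mathbf x,u))_i=K_2((\mathbf x,u),(\mathbf x^{[2]}_i,y^{[1]}_i))$, $\mu_2(\mathbf x,u)=\alpha_2+\mathbf k_2(\mathbf x,u)^T\mathbf K_2^{-1}(\mathbf y_2-\alpha_2\mathbf 1_{n_2})$, $\sigma_2^2(\mathbf x,u)=\tau_2^2(1-\mathbf k_2(\mathbf x,u)^T\mathbf K_2^{-1}\mathbf k_2(\mathbf x,u))$. $x^{[2]}_{ij}$ is the $j$-th coordinate of $\mathbf x^{[2]}_i$. The outer expectation/variance in $V_1,V_2$ is over $f_1(\mathbf x)$ given the data. *)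

theory Defs
  imports "HOL-Analysis.Analysis" "HOL-Probability.Probability"
begin

definition sqexp :: "('d::finite \<Rightarrow> real) \<Rightarrow> real^'d \<Rightarrow> real^'d \<Rightarrow> real" where
  "sqexp theta x x' = (\<Prod>j\<in>UNIV. exp (- ((x $ j) - (x' $ j))\<^sup>2 / theta j))"

definition K2fun :: "('d::finite \<Rightarrow> real) \<Rightarrow> real \<Rightarrow> (real^'d) \<times> real \<Rightarrow> (real^'d) \<times> real \<Rightarrow> real" where
  "K2fun theta thy p q = exp (- (snd p - snd q)\<^sup>2 / thy) * sqexp theta (fst p) (fst q)"

definition is_inverse :: "nat \<Rightarrow> (nat \<Rightarrow> nat \<Rightarrow> real) \<Rightarrow> (nat \<Rightarrow> nat \<Rightarrow> real) \<Rightarrow> bool" where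
  "is_inverse n K Kinv \<longleftrightarrow>
     (\<forall>i<n. \<forall>k<n. (\<Sum>l<n. K i l * Kinv l k) = (if i = k then 1 else 0)) \<and>
     (\<forall>i<n. \<forall>k<n. (\<Sum>l<n. Kinv i l * K l k) = (if i = k then 1 else 0))"

definition gauss_measure :: "real \<Rightarrow> real \<Rightarrow> real measure" where
  "gauss_measure m v = (if 0 < v then density lborel (normal_density m (sqrt v)) else return lborel m)"

end

theory Submission
  imports Defs
begin

text \<open>By the law of total variance, the variance of the Gaussian mixture
  \<open>f\<^sub>2(x) \<sim> \<integral> N(\<mu>\<^sub>2(x,u), \<sigma>\<^sub>2\<^sup>2(x,u)) dN(\<mu>\<^sub>1\<^sup>*(x), \<sigma>\<^sub>1\<^sup>*\<^sup>2(x))\<close> is \<open>V\<^sub>1 + V\<^sub>2\<close>. The posterior mean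
  \<open>\<mu>\<^sub>2(x,u)\<close> is affine and the posterior variance \<open>\<sigma>\<^sub>2\<^sup>2(x,u)\<close> quadratic in the features
  \<open>g\<^sub>i(u) = K\<^sub>2((x,u),(x\<^sub>i,y\<^sub>i))\<close>, so both terms reduce to the Gaussian expectations of products
  \<open>g\<^sub>i g\<^sub>k\<close>. Completing the square in \<open>u\<close> makes such a product a multiple of a Gaussian density,
  which integrates to the stated closed form. The formula needs \<open>\<sigma>\<^sub>1\<^sup>*\<^sup>2 \<ge> 0\<close> and
  \<open>\<sigma>\<^sub>2\<^sup>2 \<ge> 0\<close> (a negative variance would make the Gaussian degenerate); both follow from the
  positive semidefiniteness of the squared-exponential kernels, which in turn comes from the
  Taylor series of \<open>exp\<close>.\<close>

section \<open>Positive semidefinite kernels\<close>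

definition pos_semidef_kernel :: "('a \<Rightarrow> 'a \<Rightarrow> real) \<Rightarrow> bool" where
  "pos_semidef_kernel K \<longleftrightarrow> (\<forall>n p c. 0 \<le> (\<Sum>i<(n::nat). \<Sum>k<n. c i * c k * K (p i) (p k)))"

lemma pos_semidef_kernelD:
  "pos_semidef_kernel K \<Longrightarrow> 0 \<le> (\<Sum>i<(n::nat). \<Sum>k<n. c i * c k * K (p i) (p k))"
  unfolding pos_semidef_kernel_def by blast

lemma pos_semidef_kernel_comp:
  assumes "pos_semidef_kernel K"
  shows "pos_semidef_kernel (\<lambda>p q. K (f p) (f q))"
proof -
  have "0 \<le> (\<Sum>i<n. \<Sum>k<n. c i * c k * K (f (p i)) (f (p k)))" for n :: nat and p c
    using pos_semidef_kernelD[OF assms, where n=n and c=c and p="f \<circ> p"] by simp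
  then show ?thesis unfolding pos_semidef_kernel_def by blast
qed

lemma pos_semidef_kernel_scaled:
  assumes "pos_semidef_kernel K"
  shows "pos_semidef_kernel (\<lambda>p q. K p q * (f p * f q))"
  unfolding pos_semidef_kernel_def
proof (intro allI)
  fix n p c
  have "(\<Sum>i<(n::nat). \<Sum>k<n. c i * c k * (K (p i) (p k) * (f (p i) * f (p k))))
      = (\<Sum>i<n. \<Sum>k<n. (c i * f (p i)) * (c k * f (p k)) * K (p i) (p k))"
    by (simp add: algebra_simps)
  also have "\<dots> \<ge> 0" by (rule pos_semidef_kernelD[OF assms])
  finally show "0 \<le> (\<Sum>i<n. \<Sum>k<n. c i * c k * (K (p i) (p k) * (f (p i) * f (p k))))" .
qed

lemma pos_semidef_kernel_inner_power:
  assumes "finite J"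
  shows "pos_semidef_kernel (\<lambda>p q. (\<Sum>j\<in>J. w j p * w j q) ^ m)"
proof (induction m)
  case 0
  show ?case unfolding pos_semidef_kernel_def
  proof (intro allI)
    fix n p and c :: "nat \<Rightarrow> real"
    have "(\<Sum>i<n. \<Sum>k<n. c i * c k * 1) = (\<Sum>i<n. c i)\<^sup>2"
      by (simp add: power2_eq_square sum_product)
    then show "0 \<le> (\<Sum>i<n. \<Sum>k<n. c i * c k * (\<Sum>j\<in>J. w j (p i) * w j (p k)) ^ 0)" by simp
  qed
next
  case (Suc m)
  show ?case unfolding pos_semidef_kernel_def
  proof (intro allI)
    fix n p and c :: "nat \<Rightarrow> real"
    let ?B = "\<lambda>p q. (\<Sum>j\<in>J. w j p * w j q)"
    have "(\<Sum>i<n. \<Sum>k<n. c i * c k * ?B (p i) (p k) ^ Suc m)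
       = (\<Sum>j\<in>J. \<Sum>i<n. \<Sum>k<n. c i * c k * (?B (p i) (p k) ^ m * (w j (p i) * w j (p k))))"
      by (simp add: sum_distrib_left sum_distrib_right algebra_simps sum.swap[of _ J])
    also have "\<dots> \<ge> 0"
      by (rule sum_nonneg) (rule pos_semidef_kernelD[OF pos_semidef_kernel_scaled[OF Suc.IH]])
    finally show "0 \<le> (\<Sum>i<n. \<Sum>k<n. c i * c k * ?B (p i) (p k) ^ Suc m)" .
  qed
qed

text \<open>The exponential of an inner-product kernel is the limit of its Taylor partial sums, each a
  positive combination of powers of that kernel.\<close>

lemma pos_semidef_kernel_exp_inner:
  assumes fin: "finite J"
  shows "pos_semidef_kernel (\<lambda>p q. h p * h q * exp (\<Sum>j\<in>J. w j p * w j q))"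
proof -
  let ?B = "\<lambda>p q. (\<Sum>j\<in>J. w j p * w j q)"
  have "pos_semidef_kernel (\<lambda>p q. exp (?B p q))" unfolding pos_semidef_kernel_def
  proof (intro allI)
    fix n p and c :: "nat \<Rightarrow> real"
    have sums: "(\<lambda>N. \<Sum>i<n. \<Sum>k<n. c i * c k * (?B (p i) (p k) ^ N /\<^sub>R fact N))
          sums (\<Sum>i<n. \<Sum>k<n. c i * c k * exp (?B (p i) (p k)))"
      by (intro sums_sum sums_mult exp_converges)
    have partial_nonneg: "0 \<le> (\<Sum>i<n. \<Sum>k<n. c i * c k * (?B (p i) (p k) ^ N /\<^sub>R fact N))" for N
    proof -
      have "(\<Sum>i<n. \<Sum>k<n. c i * c k * (?B (p i) (p k) ^ N /\<^sub>R fact N))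
         = (1 / fact N) * (\<Sum>i<n. \<Sum>k<n. c i * c k * ?B (p i) (p k) ^ N)"
        unfolding sum_distrib_left by (intro sum.cong refl) (simp add: divide_inverse)
      also have "\<dots> \<ge> 0"
        by (rule mult_nonneg_nonneg, simp, rule pos_semidef_kernelD[OF pos_semidef_kernel_inner_power[OF fin]])
      finally show ?thesis .
    qed
    show "0 \<le> (\<Sum>i<n. \<Sum>k<n. c i * c k * exp (?B (p i) (p k)))"
      by (rule sums_le[OF partial_nonneg sums_zero sums])
  qed
  from pos_semidef_kernel_scaled[OF this, of h] show ?thesis by (simp add: mult_ac)
qed

text \<open>Positivity of the kernel at the points \<open>p 0, \<dots>, p (n - 1), z\<close> with the coefficient
  vector \<open>(K\<^sup>-\<^sup>1 k, -1)\<close>, where \<open>k i = K z (p i)\<close>, yields \<open>1 - k\<^sup>T K\<^sup>-\<^sup>1 k \<ge> 0\<close>.\<close>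

lemma pos_semidef_kernel_inverse_quadratic_le_1:
  fixes K :: "'a \<Rightarrow> 'a \<Rightarrow> real"
  assumes psd: "pos_semidef_kernel K" and sym: "\<And>a b. K a b = K b a" and diag: "K z z = 1"
    and inv: "is_inverse n (\<lambda>i k. K (p i) (p k)) Kinv"
  shows "(\<Sum>i<n. \<Sum>k<n. K z (p i) * Kinv i k * K z (p k)) \<le> 1"
proof -
  define kz where "kz i = K z (p i)" for i
  define c where "c i = (if i < n then \<Sum>l<n. Kinv i l * kz l else -1)" for i
  define Q where "Q = (\<Sum>i<n. \<Sum>k<n. kz i * Kinv i k * kz k)"
  have K_c: "(\<Sum>k<n. K (p i) (p k) * c k) = kz i" if "i < n" for i
  proof -
    have "(\<Sum>k<n. K (p i) (p k) * c k) = (\<Sum>k<n. \<Sum>l<n. K (p i) (p k) * Kinv k l * kz l)"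
      by (simp add: c_def sum_distrib_left mult.assoc)
    also have "\<dots> = (\<Sum>l<n. (\<Sum>k<n. K (p i) (p k) * Kinv k l) * kz l)"
      by (subst sum.swap) (simp add: sum_distrib_right)
    also have "\<dots> = (\<Sum>l<n. if i = l then kz l else 0)"
      using inv that unfolding is_inverse_def by (intro sum.cong) auto
    finally show ?thesis using that by simp
  qed
  have c_kz: "(\<Sum>i<n. c i * kz i) = Q"
    by (simp add: Q_def c_def sum_distrib_left sum_distrib_right mult_ac)
  have c_K_c: "(\<Sum>i<n. \<Sum>k<n. c i * c k * K (p i) (p k)) = Q"
  proof -
    have "(\<Sum>i<n. \<Sum>k<n. c i * c k * K (p i) (p k)) = (\<Sum>i<n. c i * (\<Sum>k<n. K (p i) (p k) * c k))"
      by (simp add: sum_distrib_left mult_ac)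
    then show ?thesis using K_c c_kz by simp
  qed
  define q where "q = p(n := z)"
  have "0 \<le> (\<Sum>i<Suc n. \<Sum>k<Suc n. c i * c k * K (q i) (q k))"
    by (rule pos_semidef_kernelD[OF psd])
  also have "\<dots> = (\<Sum>i<n. \<Sum>k<n. c i * c k * K (p i) (p k)) - 2 * (\<Sum>i<n. c i * kz i) + 1"
  proof -
    have q: "q i = p i" if "i \<in> {..<n}" for i using that by (simp add: q_def)
    have n: "q n = z" "c n = -1" by (simp_all add: q_def c_def)
    have "(\<Sum>i<Suc n. \<Sum>k<Suc n. c i * c k * K (q i) (q k))
        = (\<Sum>i<n. (\<Sum>k<n. c i * c k * K (q i) (q k)) + c i * c n * K (q i) (q n))
          + ((\<Sum>k<n. c n * c k * K (q n) (q k)) + c n * c n * K (q n) (q n))"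
      by (simp only: sum.lessThan_Suc)
    also have "\<dots> = (\<Sum>i<n. (\<Sum>k<n. c i * c k * K (p i) (p k)) - c i * kz i)
          + (- (\<Sum>k<n. c k * kz k) + 1)"
    proof -
      have "(\<Sum>k<n. c i * c k * K (q i) (q k)) + c i * c n * K (q i) (q n)
          = (\<Sum>k<n. c i * c k * K (p i) (p k)) - c i * kz i" if "i \<in> {..<n}" for i
      proof -
        have "(\<Sum>k<n. c i * c k * K (q i) (q k)) = (\<Sum>k<n. c i * c k * K (p i) (p k))"
          using q that by (intro sum.cong) auto
        then show ?thesis using q[OF that] n by (simp add: kz_def sym[of "p i" z])
      qed
      moreover have "(\<Sum>k<n. c n * c k * K (q n) (q k)) = - (\<Sum>k<n. c k * kz k)"
        using q n by (simp add: kz_def sum_negf)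
      ultimately show ?thesis using n diag by simp
    qed
    finally show ?thesis by (simp add: sum_subtractf)
  qed
  finally show ?thesis using c_K_c c_kz by (simp add: Q_def kz_def)
qed

section \<open>The squared-exponential kernels\<close>

lemma exp_neg_square_diff:
  assumes "(t::real) > 0"
  shows "exp (- ((a - b)\<^sup>2 / t))
    = exp (- (a\<^sup>2 / t)) * exp (- (b\<^sup>2 / t)) * exp ((sqrt (2/t) * a) * (sqrt (2/t) * b))"
proof -
  have "sqrt (2/t) * a * (sqrt (2/t) * b) = 2 * a * b / t"
    using assms by (simp add: algebra_simps)
  then show ?thesis
    unfolding mult_exp_exp using assms by (simp add: power2_eq_square field_simps)
qed

lemma sqexp_eq_exp_inner:
  assumes "\<forall>j. theta j > 0"
  shows "sqexp theta p q
    = (\<Prod>j\<in>UNIV. exp (- ((p $ j)\<^sup>2 / theta j))) * (\<Prod>j\<in>UNIV. exp (- ((q $ j)\<^sup>2 / theta j)))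
      * exp (\<Sum>j\<in>UNIV. (sqrt (2/theta j) * (p $ j)) * (sqrt (2/theta j) * (q $ j)))"
  unfolding sqexp_def exp_sum[OF finite_class.finite_UNIV] prod.distrib[symmetric]
  by (rule prod.cong[OF refl]) (simp add: exp_neg_square_diff assms)

lemma sqexp_sym: "sqexp theta a b = sqexp theta b a"
  unfolding sqexp_def by (simp add: power2_commute)

lemma sqexp_same [simp]: "sqexp theta a a = 1"
  unfolding sqexp_def by simp

lemma sqexp_pos: "sqexp theta a b > 0"
  unfolding sqexp_def by (simp add: prod_pos)

lemma sqexp_le_1:
  assumes "\<forall>j. theta j > 0"
  shows "sqexp theta a b \<le> 1"
  unfolding sqexp_def using assms by (intro prod_le_1) (auto intro: divide_nonneg_pos)

lemma sqexp_mult_sqexp: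
  "sqexp theta x p * sqexp theta x q
    = exp (- (\<Sum>j\<in>UNIV. ((x $ j - p $ j)\<^sup>2 + (x $ j - q $ j)\<^sup>2) / theta j))"
  unfolding sqexp_def exp_sum[OF finite_class.finite_UNIV, symmetric] mult_exp_exp
  by (simp add: sum_negf sum.distrib add_divide_distrib)

lemma pos_semidef_kernel_sqexp:
  assumes "\<forall>j. theta j > 0"
  shows "pos_semidef_kernel (sqexp theta)"
  using pos_semidef_kernel_exp_inner[OF finite_class.finite_UNIV,
      of "\<lambda>p. \<Prod>j\<in>UNIV. exp (- ((p $ j)\<^sup>2 / theta j))" "\<lambda>j p. sqrt (2/theta j) * (p $ j)"]
  by (simp add: sqexp_eq_exp_inner[OF assms, abs_def])

text \<open>The level-2 kernel is the squared-exponential kernel on inputs with one extra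
  coordinate, indexed by \<open>None\<close>.\<close>

lemma K2fun_eq_sqexp:
  "K2fun theta thy p q
    = sqexp (case_option thy theta)
        (\<chi> j. case j of None \<Rightarrow> snd p | Some j \<Rightarrow> fst p $ j)
        (\<chi> j. case j of None \<Rightarrow> snd q | Some j \<Rightarrow> fst q $ j)"
  unfolding K2fun_def sqexp_def UNIV_option_conv
  by (simp add: prod.reindex)

lemma K2fun_sym: "K2fun theta thy a b = K2fun theta thy b a"
  unfolding K2fun_def by (simp add: power2_commute sqexp_sym)

lemma K2fun_same [simp]: "K2fun theta thy a a = 1"
  unfolding K2fun_def by simp

lemma abs_K2fun_le_1:
  assumes "\<forall>j. theta j > 0" and "thy > 0"
  shows "\<bar>K2fun theta thy a b\<bar> \<le> 1"
  using sqexp_pos[of theta] sqexp_le_1[OF assms(1)] assms(2)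
  by (simp add: K2fun_def abs_mult mult_le_one less_imp_le)

lemma pos_semidef_kernel_K2fun:
  assumes "\<forall>j. theta j > 0" and "thy > 0"
  shows "pos_semidef_kernel (K2fun theta thy)"
proof -
  have "\<forall>j. case_option thy theta j > 0"
    using assms by (simp split: option.split)
  from pos_semidef_kernel_comp[OF pos_semidef_kernel_sqexp[OF this]]
  show ?thesis by (simp add: K2fun_eq_sqexp[abs_def])
qed

section \<open>Gaussian measures\<close>

lemma sets_gauss_measure [simp, measurable_cong]: "sets (gauss_measure m v) = sets borel"
  by (simp add: gauss_measure_def)

lemma prob_space_gauss_measure: "prob_space (gauss_measure m v)"
  by (simp add: gauss_measure_def prob_space_normal_density prob_space_return)

lemma has_bochner_integral_gauss_measure:
  fixes f :: "real \<Rightarrow> real"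
  assumes "v > 0" and [measurable]: "f \<in> borel_measurable borel"
    and "has_bochner_integral lborel (\<lambda>w. normal_density m (sqrt v) w * f w) I"
  shows "has_bochner_integral (gauss_measure m v) f I"
  using assms by (simp add: gauss_measure_def has_bochner_integral_iff integral_density
      integrable_density)

lemma has_bochner_integral_gauss_measure_0:
  fixes f :: "real \<Rightarrow> real"
  assumes [measurable]: "f \<in> borel_measurable borel"
  shows "has_bochner_integral (gauss_measure m 0) f (f m)"
proof -
  have "(\<integral>\<^sup>+ w. ennreal (norm (f w)) \<partial>return lborel m) = ennreal (norm (f m))"
    by (rule nn_integral_return) auto
  then show ?thesis
    unfolding gauss_measure_def has_bochner_integral_iff
    by (auto intro: integrableI_bounded simp: integral_return)
qed

lemma has_bochner_integral_gauss_measure_square: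
  assumes "v \<ge> 0"
  shows "has_bochner_integral (gauss_measure m v) (\<lambda>w. (w - c)\<^sup>2) (v + (m - c)\<^sup>2)"
proof (cases "v = 0")
  case True
  then show ?thesis using has_bochner_integral_gauss_measure_0[of "\<lambda>w. (w - c)\<^sup>2"] by simp
next
  case False
  then have v: "v > 0" using assms by simp
  define s where "s = sqrt v"
  have s: "s > 0" "s\<^sup>2 = v" using v by (auto simp: s_def)
  have "has_bochner_integral lborel (\<lambda>w. normal_density m s w * (w - m) ^ (2 * 1)
      + (2 * (m - c)) * (normal_density m s w * (w - m) ^ (2 * 0 + 1))
      + (m - c)\<^sup>2 * normal_density m s w)
      (s\<^sup>2 + (2 * (m - c)) * 0 + (m - c)\<^sup>2 * 1)"
    using normal_moment_even[OF s(1), of m 1] normal_moment_odd[OF s(1), of m 0]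
      integral_normal_density[OF s(1)] integrable_normal_density[OF s(1)]
    by (intro has_bochner_integral_add has_bochner_integral_mult_right)
       (simp_all add: has_bochner_integral_iff)
  then have "has_bochner_integral lborel (\<lambda>w. normal_density m s w * (w - c)\<^sup>2) (v + (m - c)\<^sup>2)"
    by (rule has_bochner_integral_cong[THEN iffD1, rotated -1])
       (auto simp: s(2)[unfolded power2_eq_square] power2_eq_square algebra_simps)
  then show ?thesis
    by (intro has_bochner_integral_gauss_measure[OF v]) (simp_all add: s_def)
qed

lemma exponent_complete_square:
  fixes v c m a w :: real
  assumes "v > 0" and "c \<ge> 0"
  defines "t \<equiv> 1 + 2 * c * v"
  shows "- ((w - m)\<^sup>2 / (2 * v)) - c * (w - a)\<^sup>2
    = - (c * (m - a)\<^sup>2 / t) - (w - (m + 2 * c * v * a) / t)\<^sup>2 / (2 * (v / t))"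
proof -
  have t: "t > 0" using assms by (simp add: t_def add_pos_nonneg)
  have "- ((w - m)\<^sup>2 / (2 * v)) - c * (w - a)\<^sup>2
      = (- t * (w - m)\<^sup>2 - 2 * c * v * t * (w - a)\<^sup>2) / (2 * v * t)"
    using assms(1) t by (simp add: field_simps)
  also have "\<dots> = (- 2 * c * v * (m - a)\<^sup>2 - (t * w - m - 2 * c * v * a)\<^sup>2) / (2 * v * t)"
    unfolding t_def by algebra
  also have "\<dots> = - (c * (m - a)\<^sup>2 / t) - (w - (m + 2 * c * v * a) / t)\<^sup>2 / (2 * (v / t))"
    using assms(1) t by (simp add: field_simps power2_eq_square)
  finally show ?thesis .
qed

lemma has_bochner_integral_gauss_measure_exp_square:
  assumes "v \<ge> 0" and "c \<ge> 0"
  shows "has_bochner_integral (gauss_measure m v) (\<lambda>w. exp (- (c * (w - a)\<^sup>2)))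
    (exp (- (c * (m - a)\<^sup>2 / (1 + 2 * c * v))) / sqrt (1 + 2 * c * v))"
proof (cases "v = 0")
  case True
  then show ?thesis
    using has_bochner_integral_gauss_measure_0[of "\<lambda>w. exp (- (c * (w - a)\<^sup>2))"] by simp
next
  case False
  then have v: "v > 0" using assms by simp
  define t where "t = 1 + 2 * c * v"
  have t: "t > 0" using v assms by (simp add: t_def add_pos_nonneg)
  define m' where "m' = (m + 2 * c * v * a) / t"
  define C where "C = exp (- (c * (m - a)\<^sup>2 / t)) / sqrt t"
  have density: "normal_density m (sqrt v) w * exp (- (c * (w - a)\<^sup>2))
      = C * normal_density m' (sqrt (v / t)) w" for w
  proof -
    have "exp (- ((w - m)\<^sup>2 / (2 * v))) * exp (- (c * (w - a)\<^sup>2))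
        = exp (- (c * (m - a)\<^sup>2 / t)) * exp (- ((w - m')\<^sup>2 / (2 * (v / t))))"
      unfolding mult_exp_exp
      using exponent_complete_square[OF v assms(2), of w m a] by (simp add: t_def m'_def)
    moreover have "sqrt (2 * pi * v) = sqrt t * sqrt (2 * pi * (v / t))"
      using t by (simp add: real_sqrt_mult[symmetric])
    ultimately show ?thesis
      using v t by (simp add: normal_density_def C_def)
  qed
  have "has_bochner_integral lborel (\<lambda>w. C * normal_density m' (sqrt (v / t)) w) (C * 1)"
    using v t integral_normal_density[of "sqrt (v / t)" m'] integrable_normal_density[of "sqrt (v / t)" m']
    by (intro has_bochner_integral_mult_right) (simp add: has_bochner_integral_iff)
  then show ?thesis
    by (intro has_bochner_integral_gauss_measure[OF v]) (simp_all add: density C_def t_def)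
qed

lemma gauss_measure_kernel_measurable:
  fixes m v :: "'a \<Rightarrow> real"
  assumes [measurable]: "m \<in> borel_measurable M" "v \<in> borel_measurable M"
  shows "(\<lambda>u. gauss_measure (m u) (v u)) \<in> measurable M (subprob_algebra borel)"
proof (rule measurable_subprob_algebra)
  fix u show "subprob_space (gauss_measure (m u) (v u))"
    by (rule prob_space_imp_subprob_space[OF prob_space_gauss_measure])
next
  fix A :: "real set" assume [measurable]: "A \<in> sets borel"
  have "emeasure (gauss_measure (m u) (v u)) A =
      (if 0 < v u then \<integral>\<^sup>+w. ennreal (normal_density (m u) (sqrt (v u)) w) * indicator A w \<partial>lborel
       else indicator A (m u))" for u
    by (simp add: gauss_measure_def emeasure_density)
  moreover have "(\<lambda>(u, w). ennreal (normal_density (m u) (sqrt (v u)) w) * indicator A w)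
      \<in> borel_measurable (M \<Otimes>\<^sub>M lborel)"
    unfolding normal_density_def by measurable
  ultimately show "(\<lambda>u. emeasure (gauss_measure (m u) (v u)) A) \<in> borel_measurable M"
    using lborel.borel_measurable_nn_integral by simp
qed simp

text \<open>Completing the square in \<open>u\<close> turns the product of the two level-2 kernels into a single
  Gaussian factor centred at \<open>(a1 + a2) / 2\<close>.\<close>

lemma has_bochner_integral_K2fun_product:
  fixes x p1 p2 :: "real^'d::finite" and theta :: "'d \<Rightarrow> real"
  assumes s: "s \<ge> 0" and thy: "thy > 0"
  shows "has_bochner_integral (gauss_measure \<mu> s)
    (\<lambda>u. K2fun theta thy (x, u) (p1, a1) * K2fun theta thy (x, u) (p2, a2))
    (exp (- (\<Sum>j\<in>UNIV. ((x $ j - p1 $ j)\<^sup>2 + (x $ j - p2 $ j)\<^sup>2) / theta j)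
        - (((a1 + a2) / 2 - \<mu>)\<^sup>2 / (thy / 2 + 2 * s) + (a1 - a2)\<^sup>2 / (2 * thy)))
      / sqrt (1 + 4 * s / thy))"
proof -
  define C where "C = sqexp theta x p1 * sqexp theta x p2 * exp (- ((a1 - a2)\<^sup>2 / (2 * thy)))"
  define c where "c = 2 / thy"
  have c: "c \<ge> 0" using thy by (simp add: c_def)
  have product: "K2fun theta thy (x, u) (p1, a1) * K2fun theta thy (x, u) (p2, a2)
      = C * exp (- (c * (u - (a1 + a2) / 2)\<^sup>2))" for u
  proof -
    have "(u - a1)\<^sup>2 / thy + (u - a2)\<^sup>2 / thy = c * (u - (a1 + a2) / 2)\<^sup>2 + (a1 - a2)\<^sup>2 / (2 * thy)"
      using thy by (simp add: c_def field_simps power2_eq_square)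
    then have "exp (- ((u - a1)\<^sup>2 / thy)) * exp (- ((u - a2)\<^sup>2 / thy))
        = exp (- ((a1 - a2)\<^sup>2 / (2 * thy))) * exp (- (c * (u - (a1 + a2) / 2)\<^sup>2))"
      unfolding mult_exp_exp by (simp add: algebra_simps)
    then show ?thesis
      unfolding C_def K2fun_def by (simp add: mult_ac)
  qed
  have "1 + 2 * c * s = 1 + 4 * s / thy" by (simp add: c_def)
  moreover have "c * (\<mu> - (a1 + a2) / 2)\<^sup>2 / (1 + 2 * c * s)
      = ((a1 + a2) / 2 - \<mu>)\<^sup>2 / (thy / 2 + 2 * s)"
    using thy s by (simp add: c_def field_simps add_pos_nonneg) (simp add: power2_commute)
  ultimately have "has_bochner_integral (gauss_measure \<mu> s)
      (\<lambda>u. C * exp (- (c * (u - (a1 + a2) / 2)\<^sup>2)))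
      (C * (exp (- (((a1 + a2) / 2 - \<mu>)\<^sup>2 / (thy / 2 + 2 * s))) / sqrt (1 + 4 * s / thy)))"
    using has_bochner_integral_mult_right[OF has_bochner_integral_gauss_measure_exp_square[OF s c]]
    by metis
  then show ?thesis
    unfolding product C_def sqexp_mult_sqexp by (simp add: exp_diff exp_add exp_minus field_simps)
qed

section \<open>Gaussian mixtures\<close>

lemma (in finite_measure) integrable_square_shift:
  fixes f :: "'a \<Rightarrow> real"
  assumes "integrable M f" and "integrable M (\<lambda>u. (f u)\<^sup>2)"
  shows "integrable M (\<lambda>u. (f u - c)\<^sup>2)"
proof -
  have "integrable M (\<lambda>u. (f u)\<^sup>2 - 2 * c * f u + c\<^sup>2)"
    using assms by (intro Bochner_Integration.integrable_add Bochner_Integration.integrable_diff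
        integrable_mult_right integrable_const)
  then show ?thesis by (simp add: power2_diff algebra_simps)
qed

lemma has_bochner_integral_gauss_mixture_square:
  fixes M :: "'a measure" and m v :: "'a \<Rightarrow> real"
  assumes "prob_space M"
    and [measurable]: "m \<in> borel_measurable M" "v \<in> borel_measurable M"
    and v_nonneg: "\<And>u. v u \<ge> 0"
    and "integrable M m" "integrable M v" "integrable M (\<lambda>u. (m u)\<^sup>2)"
  shows "has_bochner_integral (M \<bind> (\<lambda>u. gauss_measure (m u) (v u))) (\<lambda>w. (w - c)\<^sup>2)
    (\<integral>u. v u + (m u - c)\<^sup>2 \<partial>M)"
proof -
  let ?N = "\<lambda>u. gauss_measure (m u) (v u)"
  have int: "integrable M (\<lambda>u. v u + (m u - c)\<^sup>2)"
    using assms prob_space.finite_measure[OF assms(1)]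
    by (intro Bochner_Integration.integrable_add finite_measure.integrable_square_shift) auto
  have sets_B: "sets (M \<bind> ?N) = sets borel"
    by (rule sets_bind) (simp_all add: prob_space.not_empty assms(1))
  have meas: "(\<lambda>w. (w - c)\<^sup>2) \<in> borel_measurable (M \<bind> ?N)"
    unfolding measurable_cong_sets[OF sets_B refl] by simp
  have inner: "(\<integral>\<^sup>+w. ennreal ((w - c)\<^sup>2) \<partial>?N u) = ennreal (v u + (m u - c)\<^sup>2)" for u
    using has_bochner_integral_gauss_measure_square[OF v_nonneg[of u], of "m u" c]
    by (subst nn_integral_eq_integral) (auto simp: has_bochner_integral_iff)
  have "(\<integral>\<^sup>+w. ennreal ((w - c)\<^sup>2) \<partial>(M \<bind> ?N)) = (\<integral>\<^sup>+u. \<integral>\<^sup>+w. ennreal ((w - c)\<^sup>2) \<partial>?N u \<partial>M)"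
    by (rule nn_integral_bind[OF _ gauss_measure_kernel_measurable]) simp_all
  also have "\<dots> = ennreal (\<integral>u. v u + (m u - c)\<^sup>2 \<partial>M)"
    unfolding inner using int v_nonneg by (intro nn_integral_eq_integral) (auto intro: add_nonneg_nonneg)
  finally have nn: "(\<integral>\<^sup>+w. ennreal ((w - c)\<^sup>2) \<partial>(M \<bind> ?N)) = ennreal (\<integral>u. v u + (m u - c)\<^sup>2 \<partial>M)" .
  have "0 \<le> (\<integral>u. v u + (m u - c)\<^sup>2 \<partial>M)"
    by (rule integral_nonneg_AE) (simp add: v_nonneg)
  then show ?thesis
    unfolding has_bochner_integral_iff
    using integrableI_nn_integral_finite[OF meas _ nn] integral_eq_nn_integral[OF meas] nn
    by simp
qed

text \<open>The mean of the mixture follows from two second moments, as \<open>2 w = (w + 1)\<^sup>2 - w\<^sup>2 - 1\<close>.\<close>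

lemma gauss_mixture_mean:
  fixes M :: "'a measure" and m v :: "'a \<Rightarrow> real"
  assumes M: "prob_space M"
    and meas [measurable]: "m \<in> borel_measurable M" "v \<in> borel_measurable M"
    and v_nonneg: "\<And>u. v u \<ge> 0"
    and int: "integrable M m" "integrable M v" "integrable M (\<lambda>u. (m u)\<^sup>2)"
  shows "(\<integral>w. w \<partial>(M \<bind> (\<lambda>u. gauss_measure (m u) (v u)))) = (\<integral>u. m u \<partial>M)"
proof -
  interpret prob_space M by (rule M)
  let ?B = "M \<bind> (\<lambda>u. gauss_measure (m u) (v u))"
  interpret B: prob_space ?B
    by (rule prob_space_bind[OF _ gauss_measure_kernel_measurable[OF meas]])
       (simp add: prob_space_gauss_measure)
  note square = has_bochner_integral_gauss_mixture_square[OF M meas v_nonneg int]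
  have int_shift: "integrable M (\<lambda>u. v u + (m u - c)\<^sup>2)" for c
    using int by (intro Bochner_Integration.integrable_add integrable_square_shift) auto
  have "(\<integral>w. w \<partial>?B) = (\<integral>w. ((w - (-1))\<^sup>2 - (w - 0)\<^sup>2 - 1) / 2 \<partial>?B)"
    by (intro Bochner_Integration.integral_cong refl) (simp add: power2_eq_square algebra_simps)
  also have "\<dots> = ((\<integral>w. (w - (-1))\<^sup>2 \<partial>?B) - (\<integral>w. (w - 0)\<^sup>2 \<partial>?B) - 1) / 2"
    using square[of "-1"] square[of 0] B.prob_space
    by (simp add: has_bochner_integral_iff Bochner_Integration.integral_diff)
  also have "\<dots> = ((\<integral>u. v u + (m u - (-1))\<^sup>2 \<partial>M) - (\<integral>u. v u + (m u - 0)\<^sup>2 \<partial>M) - 1) / 2"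
    by (simp only: has_bochner_integral_integral_eq[OF square[of "-1"]]
        has_bochner_integral_integral_eq[OF square[of 0]])
  also have "\<dots> = ((\<integral>u. (v u + (m u - (-1))\<^sup>2) - (v u + (m u - 0)\<^sup>2) \<partial>M) - 1) / 2"
    by (simp only: Bochner_Integration.integral_diff[OF int_shift int_shift])
  also have "\<dots> = ((\<integral>u. 2 * m u + 1 \<partial>M) - 1) / 2"
    by (intro arg_cong2[where f = "(/)"] arg_cong2[where f = "(-)"]
        Bochner_Integration.integral_cong refl) (simp add: power2_eq_square algebra_simps)
  also have "\<dots> = (\<integral>u. m u \<partial>M)"
    using int prob_space by simp
  finally show ?thesis .
qed

lemma gauss_mixture_variance:
  fixes M :: "'a measure" and m v :: "'a \<Rightarrow> real"
  assumes M: "prob_space M"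
    and meas [measurable]: "m \<in> borel_measurable M" "v \<in> borel_measurable M"
    and v_nonneg: "\<And>u. v u \<ge> 0"
    and int: "integrable M m" "integrable M v" "integrable M (\<lambda>u. (m u)\<^sup>2)"
  defines "B \<equiv> M \<bind> (\<lambda>u. gauss_measure (m u) (v u))"
  shows "(\<integral>w. (w - (\<integral>w. w \<partial>B))\<^sup>2 \<partial>B) = (\<integral>u. (m u - (\<integral>u. m u \<partial>M))\<^sup>2 \<partial>M) + (\<integral>u. v u \<partial>M)"
proof -
  have "(\<integral>w. (w - (\<integral>w. w \<partial>B))\<^sup>2 \<partial>B) = (\<integral>u. v u + (m u - (\<integral>u. m u \<partial>M))\<^sup>2 \<partial>M)"
    using has_bochner_integral_gauss_mixture_square[OF M meas v_nonneg int]
      gauss_mixture_mean[OF M meas v_nonneg int]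
    by (simp add: B_def has_bochner_integral_iff)
  also have "\<dots> = (\<integral>u. (m u - (\<integral>u. m u \<partial>M))\<^sup>2 \<partial>M) + (\<integral>u. v u \<partial>M)"
  proof -
    have "integrable M (\<lambda>u. (m u - (\<integral>u. m u \<partial>M))\<^sup>2)"
      using int by (intro finite_measure.integrable_square_shift[OF prob_space.finite_measure[OF M]])
    then show ?thesis
      using Bochner_Integration.integral_add[OF int(2)] by simp
  qed
  finally show ?thesis .
qed

lemma gauss_feature_mixture_moments:
  fixes M :: "real measure" and g :: "nat \<Rightarrow> real \<Rightarrow> real" and r :: "nat \<Rightarrow> real"
    and A :: "nat \<Rightarrow> nat \<Rightarrow> real" and c \<tau> :: real and n :: nat
  defines "m \<equiv> \<lambda>u. c + (\<Sum>i<n. g i u * r i)"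
    and "s \<equiv> \<lambda>u. \<tau> * (1 - (\<Sum>i<n. \<Sum>k<n. g i u * A i k * g k u))"
  defines "B \<equiv> M \<bind> (\<lambda>u. gauss_measure (m u) (s u))"
  assumes M: "prob_space M" and sets_M [measurable_cong]: "sets M = sets borel"
    and g_meas [measurable]: "\<And>i. g i \<in> borel_measurable borel"
    and g_bounded: "\<And>i u. \<bar>g i u\<bar> \<le> 1"
    and s_nonneg: "\<And>u. s u \<ge> 0"
  shows "(\<integral>w. (w - (\<integral>w. w \<partial>B))\<^sup>2 \<partial>B) = (\<integral>u. (m u - (\<integral>w. m w \<partial>M))\<^sup>2 \<partial>M) + (\<integral>u. s u \<partial>M)"
    and "(\<integral>u. (m u - (\<integral>w. m w \<partial>M))\<^sup>2 \<partial>M)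
      = - ((\<integral>w. w \<partial>B) - c)\<^sup>2 + (\<Sum>i<n. \<Sum>k<n. r i * r k * (\<integral>u. g i u * g k u \<partial>M))"
    and "(\<integral>u. s u \<partial>M) = \<tau> * (1 - (\<Sum>i<n. \<Sum>k<n. A i k * (\<integral>u. g i u * g k u \<partial>M)))"
proof -
  interpret prob_space M by (rule M)
  have bounded_integrable: "integrable M f"
    if "f \<in> borel_measurable borel" "\<And>u. \<bar>f u\<bar> \<le> C" for f :: "real \<Rightarrow> real" and C
    using that by (intro integrable_const_bound[where B = C]) auto
  have m_meas [measurable]: "m \<in> borel_measurable M" and s_meas [measurable]: "s \<in> borel_measurable M"
    by (simp_all add: m_def s_def)
  have gg_bounded: "\<bar>g i u * g k u\<bar> \<le> 1" for i k u
    using g_bounded[of i u] g_bounded[of k u] by (simp add: abs_mult mult_le_one)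
  have int_gg: "integrable M (\<lambda>u. g i u * g k u)" for i k
    by (rule bounded_integrable[OF _ gg_bounded]) simp
  have m_bounded: "\<bar>m u\<bar> \<le> \<bar>c\<bar> + (\<Sum>i<n. \<bar>r i\<bar>)" for u
  proof -
    have "\<bar>\<Sum>i<n. g i u * r i\<bar> \<le> (\<Sum>i<n. \<bar>r i\<bar>)"
      using g_bounded
      by (intro order_trans[OF sum_abs sum_mono]) (simp add: abs_mult mult_left_le_one_le)
    then show ?thesis unfolding m_def by (simp add: order_trans[OF abs_triangle_ineq])
  qed
  have int_m: "integrable M m"
    by (rule bounded_integrable[OF _ m_bounded]) (simp add: m_def)
  have int_m2: "integrable M (\<lambda>u. (m u)\<^sup>2)"
    using power_mono[OF m_bounded abs_ge_zero, of _ 2]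
    by (intro bounded_integrable) (auto simp: m_def)
  have "\<bar>s u\<bar> \<le> \<bar>\<tau>\<bar> * (1 + (\<Sum>i<n. \<Sum>k<n. \<bar>A i k\<bar>))" for u
  proof -
    have "\<bar>\<Sum>i<n. \<Sum>k<n. g i u * A i k * g k u\<bar> \<le> (\<Sum>i<n. \<Sum>k<n. \<bar>A i k\<bar>)"
    proof (intro order_trans[OF sum_abs sum_mono] order_trans[OF sum_abs sum_mono])
      fix i k
      have "\<bar>g i u * A i k * g k u\<bar> = \<bar>A i k\<bar> * \<bar>g i u * g k u\<bar>"
        by (simp add: abs_mult mult_ac)
      also have "\<dots> \<le> \<bar>A i k\<bar>"
        by (rule mult_right_le_one_le[OF abs_ge_zero abs_ge_zero gg_bounded])
      finally show "\<bar>g i u * A i k * g k u\<bar> \<le> \<bar>A i k\<bar>" .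
    qed
    then show ?thesis unfolding s_def abs_mult by (intro mult_left_mono) auto
  qed
  then have int_s: "integrable M s"
    by (intro bounded_integrable) (auto simp: s_def)
  have gauss_mean: "(\<integral>w. w \<partial>B) = (\<integral>u. m u \<partial>M)"
    unfolding B_def by (rule gauss_mixture_mean[OF M m_meas s_meas s_nonneg int_m int_s int_m2])
  show "(\<integral>w. (w - (\<integral>w. w \<partial>B))\<^sup>2 \<partial>B) = (\<integral>u. (m u - (\<integral>w. m w \<partial>M))\<^sup>2 \<partial>M) + (\<integral>u. s u \<partial>M)"
    unfolding B_def by (rule gauss_mixture_variance[OF M m_meas s_meas s_nonneg int_m int_s int_m2])
  have "(\<integral>u. (m u - c)\<^sup>2 \<partial>M) = (\<integral>u. (\<Sum>i<n. \<Sum>k<n. r i * r k * (g i u * g k u)) \<partial>M)"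
    unfolding m_def by (simp add: power2_eq_square sum_product mult_ac)
  also have "\<dots> = (\<Sum>i<n. \<Sum>k<n. r i * r k * (\<integral>u. g i u * g k u \<partial>M))"
    using int_gg by simp
  finally have second: "(\<integral>u. (m u - c)\<^sup>2 \<partial>M) = \<dots>" .
  have "(\<integral>u. (m u - (\<integral>w. m w \<partial>M))\<^sup>2 \<partial>M) = variance (\<lambda>u. m u - c)"
    using int_m prob_space by simp
  also have "\<dots> = (\<integral>u. (m u - c)\<^sup>2 \<partial>M) - ((\<integral>u. m u \<partial>M) - c)\<^sup>2"
    using int_m prob_space integrable_square_shift[OF int_m int_m2] by (subst variance_eq) auto
  finally show "(\<integral>u. (m u - (\<integral>w. m w \<partial>M))\<^sup>2 \<partial>M)
      = - ((\<integral>w. w \<partial>B) - c)\<^sup>2 + (\<Sum>i<n. \<Sum>k<n. r i * r k * (\<integral>u. g i u * g k u \<partial>M))"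
    unfolding gauss_mean second by simp
  have "(\<integral>u. s u \<partial>M) = (\<integral>u. \<tau> * (1 - (\<Sum>i<n. \<Sum>k<n. A i k * (g i u * g k u))) \<partial>M)"
    unfolding s_def by (simp add: mult_ac)
  also have "\<dots> = \<tau> * (1 - (\<Sum>i<n. \<Sum>k<n. A i k * (\<integral>u. g i u * g k u \<partial>M)))"
    using int_gg prob_space by simp
  finally show "(\<integral>u. s u \<partial>M) = \<tau> * (1 - (\<Sum>i<n. \<Sum>k<n. A i k * (\<integral>u. g i u * g k u \<partial>M)))" .
qed

theorem mainTheorem3:
  fixes x :: "real^'d::finite"
    and X1 :: "nat \<Rightarrow> real^'d"
    and n1 n2 :: nat
    and y1 y2 :: "nat \<Rightarrow> real"
    and alpha1 alpha2 tau1sq tau2sq theta2y :: real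
    and theta1 theta2 :: "'d \<Rightarrow> real"
    and Kinv1 Kinv2 :: "nat \<Rightarrow> nat \<Rightarrow> real"
  assumes nested: "n2 \<le> n1"
    and tau1: "tau1sq > 0" and tau2: "tau2sq > 0"
    and th1: "\<forall>j. theta1 j > 0" and th2: "\<forall>j. theta2 j > 0" and th2y: "theta2y > 0"
    and inv1: "is_inverse n1 (\<lambda>i k. sqexp theta1 (X1 i) (X1 k)) Kinv1"
    and inv2: "is_inverse n2 (\<lambda>i k. K2fun theta2 theta2y (X1 i, y1 i) (X1 k, y1 k)) Kinv2"
  shows
   "let mu1 = alpha1 + (\<Sum>i<n1. \<Sum>k<n1.
              sqexp theta1 x (X1 i) * Kinv1 i k * (y1 k - alpha1));
        s1 = tau1sq * (1 - (\<Sum>i<n1. \<Sum>k<n1.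
              sqexp theta1 x (X1 i) * Kinv1 i k * sqexp theta1 x (X1 k)));
        r = (\<lambda>i. \<Sum>k<n2. Kinv2 i k * (y2 k - alpha2));
        mu2 = (\<lambda>u. alpha2 + (\<Sum>i<n2. K2fun theta2 theta2y (x, u) (X1 i, y1 i) * r i));
        s2 = (\<lambda>u. tau2sq * (1 - (\<Sum>i<n2. \<Sum>k<n2.
              K2fun theta2 theta2y (x, u) (X1 i, y1 i) * Kinv2 i k
                * K2fun theta2 theta2y (x, u) (X1 k, y1 k))));
        P1 = gauss_measure mu1 s1;
        P2 = bind P1 (\<lambda>u. gauss_measure (mu2 u) (s2 u));
        mu2star = (\<integral>v. v \<partial>P2);
        s2star = (\<integral>v. (v - mu2star)\<^sup>2 \<partial>P2);
        V1 = (\<integral>u. (mu2 u - (\<integral>w. mu2 w \<partial>P1))\<^sup>2 \<partial>P1);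
        V2 = (\<integral>u. s2 u \<partial>P1);
        a = (\<lambda>i k. ((y1 i + y1 k) / 2 - mu1)\<^sup>2 / (theta2y / 2 + 2 * s1)
                     + (y1 i - y1 k)\<^sup>2 / (2 * theta2y));
        E = (\<lambda>i k. exp (- (\<Sum>j\<in>UNIV. (((x $ j) - (X1 i $ j))\<^sup>2 + ((x $ j) - (X1 k $ j))\<^sup>2) / theta2 j)
                         - a i k))
    in s2star = V1 + V2
     \<and> V1 = - (mu2star - alpha2)\<^sup>2
          + (\<Sum>i<n2. \<Sum>k<n2. r i * r k / sqrt (1 + 4 * s1 / theta2y) * E i k)
     \<and> V2 = tau2sq * (1 - 1 / sqrt (1 + 4 * s1 / theta2y) * (\<Sum>i<n2. \<Sum>k<n2. Kinv2 i k * E i k))"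
proof -
  define mu1 where "mu1 = alpha1 + (\<Sum>i<n1. \<Sum>k<n1. sqexp theta1 x (X1 i) * Kinv1 i k * (y1 k - alpha1))"
  define s1 where "s1 = tau1sq * (1 - (\<Sum>i<n1. \<Sum>k<n1.
      sqexp theta1 x (X1 i) * Kinv1 i k * sqexp theta1 x (X1 k)))"
  define g where "g i u = K2fun theta2 theta2y (x, u) (X1 i, y1 i)" for i u
  have s1_nonneg: "0 \<le> s1"
    using pos_semidef_kernel_inverse_quadratic_le_1[OF pos_semidef_kernel_sqexp[OF th1] sqexp_sym
        sqexp_same inv1] tau1
    by (simp add: s1_def)
  have s2_nonneg: "0 \<le> tau2sq * (1 - (\<Sum>i<n2. \<Sum>k<n2. g i u * Kinv2 i k * g k u))" for u
    using pos_semidef_kernel_inverse_quadratic_le_1[OF pos_semidef_kernel_K2fun[OF th2 th2y]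
        K2fun_sym K2fun_same inv2] tau2
    by (simp add: g_def)
  have g_bounded: "\<bar>g i u\<bar> \<le> 1" for i u
    unfolding g_def by (rule abs_K2fun_le_1[OF th2 th2y])
  have g_meas: "g i \<in> borel_measurable borel" for i
    unfolding g_def[abs_def] K2fun_def by simp
  note moments = gauss_feature_mixture_moments[where M = "gauss_measure mu1 s1",
      OF prob_space_gauss_measure sets_gauss_measure g_meas g_bounded s2_nonneg]
  have pairs: "(\<integral>u. g i u * g k u \<partial>gauss_measure mu1 s1)
      = exp (- (\<Sum>j\<in>UNIV. ((x $ j - X1 i $ j)\<^sup>2 + (x $ j - X1 k $ j)\<^sup>2) / theta2 j)
          - (((y1 i + y1 k) / 2 - mu1)\<^sup>2 / (theta2y / 2 + 2 * s1) + (y1 i - y1 k)\<^sup>2 / (2 * theta2y)))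
        / sqrt (1 + 4 * s1 / theta2y)" for i k
    unfolding g_def
    by (rule has_bochner_integral_integral_eq[OF has_bochner_integral_K2fun_product[OF s1_nonneg th2y]])
  show ?thesis
    unfolding Let_def mu1_def[symmetric] s1_def[symmetric] g_def[symmetric] moments pairs
    by (simp add: sum_divide_distrib)
qed

end
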